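(* Let $c\ge 2$ and let $G$ be a $c$-edge-colored graph. Then $G$ is PC acyclic of type 3 if and only if $G$ has no PC closed walk.
   Context: A $c$-edge-colored graph is a finite undirected graph in which every edge is assigned a color from $\{1,\dots,c\}$. A walk $W=v_1e_1v_2\dots v_{p-1}e_{p-1}v_p$ is closed if $v_1=v_p$. A walk is properly colored (PC) if $e_i$ and $e_{i+1}$ have different colors for every $i\in\{1,\dots,p-2\}$ and, if the walk is closed, $e_{p-1}$ and $e_1$ also have different colors. An ordering $v_1,\dots,v_n$ of $V(G)$ is of type 3 if for every $i\in[n]$, all edges from $v_i$ to $\{v_{i+1},\dots,v_n\}$ have the same color. $G$ is PC acyclic of type 3 if it has an ordering of its vertices of type 3. *)

theory Defs
  imports Main
begin

definition edge_colored_graph :: "nat \<Rightarrow> 'v set \<Rightarrow> 'v set set \<Rightarrow> ('v set \<Rightarrow> nat) \<Rightarrow> bool" where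
  "edge_colored_graph c V E col \<longleftrightarrow>
     finite V \<and> (\<forall>e\<in>E. e \<subseteq> V \<and> card e = 2) \<and> (\<forall>e\<in>E. col e \<in> {1..c})"

definition walk :: "'v set \<Rightarrow> 'v set set \<Rightarrow> 'v list \<Rightarrow> bool" where
  "walk V E vs \<longleftrightarrow> vs \<noteq> [] \<and> set vs \<subseteq> V \<and>
     (\<forall>i. Suc i < length vs \<longrightarrow> {vs ! i, vs ! Suc i} \<in> E)"

definition walk_edge :: "'v list \<Rightarrow> nat \<Rightarrow> 'v set" where
  "walk_edge vs i = {vs ! i, vs ! Suc i}"

definition pc_closed_walk :: "'v set \<Rightarrow> 'v set set \<Rightarrow> ('v set \<Rightarrow> nat) \<Rightarrow> 'v list \<Rightarrow> bool" where
  "pc_closed_walk V E col vs \<longleftrightarrow>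
     walk V E vs \<and> length vs \<ge> 2 \<and> hd vs = last vs \<and>
     (\<forall>i. i + 2 < length vs \<longrightarrow> col (walk_edge vs i) \<noteq> col (walk_edge vs (Suc i))) \<and>
     col (walk_edge vs (length vs - 2)) \<noteq> col (walk_edge vs 0)"

definition type3_ordering :: "'v set \<Rightarrow> 'v set set \<Rightarrow> ('v set \<Rightarrow> nat) \<Rightarrow> 'v list \<Rightarrow> bool" where
  "type3_ordering V E col ord \<longleftrightarrow>
     distinct ord \<and> set ord = V \<and>
     (\<forall>i j k. i < j \<and> i < k \<and> j < length ord \<and> k < length ord \<and>
        {ord ! i, ord ! j} \<in> E \<and> {ord ! i, ord ! k} \<in> E \<longrightarrow>
        col {ord ! i, ord ! j} = col {ord ! i, ord ! k})"

definition pc_acyclic_type3 :: "'v set \<Rightarrow> 'v set set \<Rightarrow> ('v set \<Rightarrow> nat) \<Rightarrow> bool" where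
  "pc_acyclic_type3 V E col \<longleftrightarrow> (\<exists>ord. type3_ordering V E col ord)"

end

theory Submission
  imports Defs
begin

text \<open>In a type-3 ordering, the earliest vertex visited by a closed walk sends all its edges
towards the walk in one colour, whereas in a PC closed walk every vertex meets two walk edges of
different colours. Conversely, if every vertex of a nonempty graph saw two colours, one could
keep walking, always leaving a vertex by an edge coloured differently from the arriving one;
finitely many directed edges force a repetition, which closes a PC walk. Hence without PC closed
walks some vertex is monochromatic; it goes first, and the rest is ordered recursively.\<close>

definition monochromatic_at :: "'v set set \<Rightarrow> ('v set \<Rightarrow> nat) \<Rightarrow> 'v \<Rightarrow> bool" where
  "monochromatic_at E col v \<longleftrightarrow> (\<forall>e1\<in>E. \<forall>e2\<in>E. v \<in> e1 \<longrightarrow> v \<in> e2 \<longrightarrow> col e1 = col e2)"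

lemma pc_closed_walk_bicoloured_at:
  assumes pc: "pc_closed_walk V E col vs" and "v \<in> set vs"
  obtains a b where "a \<in> set vs" "b \<in> set vs" "{v, a} \<in> E" "{v, b} \<in> E" "col {v, a} \<noteq> col {v, b}"
proof -
  define L where "L = length vs"
  have L: "L \<ge> 2" "hd vs = last vs" and edge: "\<And>i. Suc i < L \<Longrightarrow> {vs ! i, vs ! Suc i} \<in> E"
    and alt: "\<And>i. i + 2 < L \<Longrightarrow> col (walk_edge vs i) \<noteq> col (walk_edge vs (Suc i))"
    and wrap: "col (walk_edge vs (L - 2)) \<noteq> col (walk_edge vs 0)"
    using pc unfolding pc_closed_walk_def walk_def L_def by auto
  have "vs \<noteq> []" using L(1) by (auto simp: L_def)
  then have closed: "vs ! (L - 1) = vs ! 0" using L(2) by (simp add: hd_conv_nth last_conv_nth L_def)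
  obtain p where p: "p < L" "vs ! p = v" using \<open>v \<in> set vs\<close> by (auto simp: L_def in_set_conv_nth)
  have on_walk: "\<And>q. q < L \<Longrightarrow> vs ! q \<in> set vs" by (simp add: L_def)
  show thesis
  proof (cases "0 < p \<and> p < L - 1")
    case True
    then have "p - 1 + 2 < L" "p - 1 < L" "Suc p < L" by linarith+
    then have "col {vs ! (p - 1), vs ! p} \<noteq> col {vs ! p, vs ! Suc p}"
      using alt[of "p - 1"] True by (simp add: walk_edge_def)
    moreover have "{vs ! (p - 1), vs ! p} \<in> E" "{vs ! p, vs ! Suc p} \<in> E"
      using edge[of "p - 1"] edge[of p] True \<open>Suc p < L\<close> by simp_all
    ultimately show thesis
      using that[of "vs ! (p - 1)" "vs ! Suc p"] p on_walk \<open>p - 1 < L\<close> \<open>Suc p < L\<close>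
      by (simp add: insert_commute)
  next
    case False
    then have "p = 0 \<or> p = L - 1" using p(1) by linarith
    then have "v = vs ! 0" using p(2) closed by auto
    moreover have "Suc (L - 2) = L - 1" using L by simp
    ultimately have "{v, vs ! (L - 2)} \<in> E" "{v, vs ! 1} \<in> E"
      "col {v, vs ! (L - 2)} \<noteq> col {v, vs ! 1}"
      using edge[of "L - 2"] edge[of 0] wrap closed L
      by (auto simp: walk_edge_def insert_commute)
    moreover have "vs ! (L - 2) \<in> set vs" "vs ! 1 \<in> set vs" using on_walk L(1) by simp_all
    ultimately show thesis using that by blast
  qed
qed

lemma type3_ordering_least_vertex:
  assumes ord: "type3_ordering V E col ord" and loopless: "\<forall>e\<in>E. card e = 2"
    and "S \<subseteq> V" "S \<noteq> {}"
  obtains v where "v \<in> S"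
    "\<And>a b. a \<in> S \<Longrightarrow> b \<in> S \<Longrightarrow> {v, a} \<in> E \<Longrightarrow> {v, b} \<in> E \<Longrightarrow> col {v, a} = col {v, b}"
proof -
  have S: "S \<subseteq> set ord" using ord \<open>S \<subseteq> V\<close> by (simp add: type3_ordering_def)
  define P where "P i \<longleftrightarrow> i < length ord \<and> ord ! i \<in> S" for i
  have index: "\<exists>j. P j \<and> x = ord ! j" if "x \<in> S" for x
    using that S in_set_conv_nth[of x ord] unfolding P_def by blast
  define i where "i = (LEAST i. P i)"
  have Pi: "P i"
    using index \<open>S \<noteq> {}\<close> unfolding i_def by (auto intro: LeastI)
  have later: "\<exists>j. i < j \<and> j < length ord \<and> x = ord ! j" if "x \<in> S" "{ord ! i, x} \<in> E" for x
  proof -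
    obtain j where j: "P j" "x = ord ! j" using index \<open>x \<in> S\<close> by blast
    have "x \<noteq> ord ! i" using that(2) loopless by force
    then have "i \<noteq> j" using j by blast
    moreover have "i \<le> j" using j(1) unfolding i_def by (rule Least_le)
    ultimately show ?thesis using j P_def le_neq_implies_less by blast
  qed
  show thesis
  proof (rule that)
    show "ord ! i \<in> S" using Pi P_def by simp
    fix a b assume "a \<in> S" "b \<in> S" "{ord ! i, a} \<in> E" "{ord ! i, b} \<in> E"
    then obtain j k where "i < j" "j < length ord" "a = ord ! j" "i < k" "k < length ord" "b = ord ! k"
      using later by meson
    with ord \<open>{ord ! i, a} \<in> E\<close> \<open>{ord ! i, b} \<in> E\<close>
    show "col {ord ! i, a} = col {ord ! i, b}" unfolding type3_ordering_def by blast
  qed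
qed

lemma type3_ordering_no_pc_closed_walk:
  assumes "type3_ordering V E col ord" "\<forall>e\<in>E. card e = 2"
  shows "\<not> pc_closed_walk V E col vs"
proof
  assume pc: "pc_closed_walk V E col vs"
  then have "set vs \<subseteq> V" "set vs \<noteq> {}" by (auto simp: pc_closed_walk_def walk_def)
  with assms show False
  proof (rule type3_ordering_least_vertex)
    fix v assume "v \<in> set vs" and mono:
      "\<And>a b. a \<in> set vs \<Longrightarrow> b \<in> set vs \<Longrightarrow> {v, a} \<in> E \<Longrightarrow> {v, b} \<in> E \<Longrightarrow> col {v, a} = col {v, b}"
    obtain a b where "a \<in> set vs" "b \<in> set vs" "{v, a} \<in> E" "{v, b} \<in> E"
      "col {v, a} \<noteq> col {v, b}"
      using pc \<open>v \<in> set vs\<close> by (rule pc_closed_walk_bicoloured_at)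
    with mono show False by blast
  qed
qed

lemma pc_closed_walk_of_arc_sequence:
  fixes g :: "nat \<Rightarrow> 'v \<times> 'v"
  assumes "\<forall>e\<in>E. e \<subseteq> V"
    and arc: "\<And>k. {fst (g k), snd (g k)} \<in> E"
    and linked: "\<And>k. fst (g (Suc k)) = snd (g k)"
    and alternating: "\<And>k. col {fst (g (Suc k)), snd (g (Suc k))} \<noteq> col {fst (g k), snd (g k)}"
    and "n \<ge> 1" "g n = g 0"
  shows "pc_closed_walk V E col (map (fst \<circ> g) [0..<Suc n])"
proof -
  define vs where "vs = map (fst \<circ> g) [0..<Suc n]"
  have len: "length vs = Suc n" unfolding vs_def by simp
  have nth: "\<And>k. k < Suc n \<Longrightarrow> vs ! k = fst (g k)" unfolding vs_def by (simp del: upt_Suc)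
  have edge: "\<And>k. k < n \<Longrightarrow> walk_edge vs k = {fst (g k), snd (g k)}"
    unfolding walk_edge_def using nth linked by auto
  have "walk V E vs"
    unfolding walk_def
  proof (intro conjI allI impI)
    have "fst (g k) \<in> V" for k using arc[of k] assms(1) by blast
    then show "vs \<noteq> []" "set vs \<subseteq> V" using len by (auto simp: vs_def)
    fix i assume "Suc i < length vs"
    then show "{vs ! i, vs ! Suc i} \<in> E" using edge[of i] arc[of i] len by (simp add: walk_edge_def)
  qed
  moreover have "hd vs = last vs"
  proof -
    have "vs \<noteq> []" using len by auto
    then have "hd vs = vs ! 0" "last vs = vs ! n" using len by (simp_all add: hd_conv_nth last_conv_nth)
    then show ?thesis using nth[of 0] nth[of n] \<open>g n = g 0\<close> by simp
  qed
  moreover have "col (walk_edge vs i) \<noteq> col (walk_edge vs (Suc i))" if "i + 2 < length vs" for i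
    using that len edge[of i] edge[of "Suc i"] alternating[of i] by simp
  moreover have "col (walk_edge vs (length vs - 2)) \<noteq> col (walk_edge vs 0)"
    using edge[of "n - 1"] edge[of 0] alternating[of "n - 1"] len \<open>n \<ge> 1\<close> \<open>g n = g 0\<close> by simp
  ultimately show ?thesis using len \<open>n \<ge> 1\<close> unfolding pc_closed_walk_def vs_def by auto
qed

lemma pc_closed_walk_if_no_monochromatic_vertex:
  assumes "finite V" and graph: "\<forall>e\<in>E. e \<subseteq> V \<and> card e = 2" and "V \<noteq> {}"
    and bicoloured: "\<forall>v\<in>V. \<not> monochromatic_at E col v"
  shows "\<exists>vs. pc_closed_walk V E col vs"
proof -
  have leave: "\<exists>x. {w, x} \<in> E \<and> col {w, x} \<noteq> col {u, w}" if "{u, w} \<in> E" for u w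
  proof -
    have "w \<in> V" using that graph by blast
    then obtain e1 e2 where e12: "e1 \<in> E" "e2 \<in> E" "w \<in> e1" "w \<in> e2" "col e1 \<noteq> col e2"
      using bicoloured unfolding monochromatic_at_def by blast
    then have "\<exists>e\<in>{e1, e2}. col e \<noteq> col {u, w}" by auto
    then obtain e where e: "e \<in> E" "w \<in> e" "col e \<noteq> col {u, w}" using e12 by blast
    then obtain a b where "e = {a, b}" using graph card_2_iff by metis
    with e have "e = {w, if w = a then b else a}" by auto
    with e show ?thesis by blast
  qed
  define next_arc where
    "next_arc = (\<lambda>(u, w). (w, SOME x. {w, x} \<in> E \<and> col {w, x} \<noteq> col {u, w}))"
  have next_arc: "fst (next_arc (u, w)) = w \<and> {w, snd (next_arc (u, w))} \<in> E \<and>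
      col {w, snd (next_arc (u, w))} \<noteq> col {u, w}" if "{u, w} \<in> E" for u w
    using someI_ex[OF leave[OF that]] unfolding next_arc_def by simp
  obtain e where "e \<in> E"
    using \<open>V \<noteq> {}\<close> bicoloured unfolding monochromatic_at_def by blast
  then obtain u0 w0 where "{u0, w0} \<in> E" using graph card_2_iff by metis
  define f where "f n = (next_arc ^^ n) (u0, w0)" for n
  have f_Suc: "f (Suc n) = next_arc (fst (f n), snd (f n))" for n by (simp add: f_def)
  have arc: "{fst (f n), snd (f n)} \<in> E" for n
  proof (induction n)
    case 0
    show ?case using \<open>{u0, w0} \<in> E\<close> by (simp add: f_def)
  next
    case (Suc n)
    then show ?case using next_arc[OF Suc] by (simp add: f_Suc)
  qed
  have step: "fst (f (Suc n)) = snd (f n)"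
    "col {fst (f (Suc n)), snd (f (Suc n))} \<noteq> col {fst (f n), snd (f n)}" for n
    using next_arc[OF arc[of n]] f_Suc[of n] by simp_all
  have "f n \<in> V \<times> V" for n using arc[of n] graph by (cases "f n") auto
  then have "range f \<subseteq> V \<times> V" by blast
  then have "finite (range f)" using \<open>finite V\<close> finite_subset by blast
  then have "\<not> inj f" using finite_imageD infinite_UNIV_nat by blast
  then obtain i j where "i \<noteq> j" "f i = f j" unfolding inj_def by blast
  then obtain i j where "i < j" "f i = f j" by (metis linorder_neqE_nat)
  define g where "g k = f (i + k)" for k
  have "pc_closed_walk V E col (map (fst \<circ> g) [0..<Suc (j - i)])"
  proof (rule pc_closed_walk_of_arc_sequence)
    show "\<forall>e\<in>E. e \<subseteq> V" using graph by blast
    show "{fst (g k), snd (g k)} \<in> E" "fst (g (Suc k)) = snd (g k)"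
      "col {fst (g (Suc k)), snd (g (Suc k))} \<noteq> col {fst (g k), snd (g k)}" for k
      using arc[of "i + k"] step[of "i + k"] by (simp_all add: g_def)
    show "1 \<le> j - i" "g (j - i) = g 0" using \<open>i < j\<close> \<open>f i = f j\<close> by (simp_all add: g_def)
  qed
  then show ?thesis by blast
qed

lemma pc_closed_walk_subgraph:
  assumes "pc_closed_walk V' E' col vs" "V' \<subseteq> V" "E' \<subseteq> E"
  shows "pc_closed_walk V E col vs"
  using assms unfolding pc_closed_walk_def walk_def by blast

lemma type3_ordering_Cons:
  assumes ord: "type3_ordering (V - {v}) {e \<in> E. v \<notin> e} col ord"
    and "v \<in> V" and mono: "monochromatic_at E col v"
  shows "type3_ordering V E col (v # ord)"
  unfolding type3_ordering_def
proof (intro conjI allI impI)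
  show "distinct (v # ord)" "set (v # ord) = V"
    using ord \<open>v \<in> V\<close> by (auto simp: type3_ordering_def)
  fix i j k assume h: "i < j \<and> i < k \<and> j < length (v # ord) \<and> k < length (v # ord) \<and>
    {(v # ord) ! i, (v # ord) ! j} \<in> E \<and> {(v # ord) ! i, (v # ord) ! k} \<in> E"
  show "col {(v # ord) ! i, (v # ord) ! j} = col {(v # ord) ! i, (v # ord) ! k}"
  proof (cases i)
    case 0
    then show ?thesis using h mono unfolding monochromatic_at_def by (metis insertI1 nth_Cons_0)
  next
    case (Suc i')
    obtain j' k' where jk: "j = Suc j'" "k = Suc k'" using h Suc by (metis Suc_lessE)
    have not_v: "ord ! m \<noteq> v" if "m < length ord" for m
      using ord that nth_mem unfolding type3_ordering_def by fastforce
    from h Suc jk not_v[of i'] not_v[of j'] not_v[of k']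
    have "i' < j' \<and> i' < k' \<and> j' < length ord \<and> k' < length ord \<and>
        {ord ! i', ord ! j'} \<in> {e \<in> E. v \<notin> e} \<and> {ord ! i', ord ! k'} \<in> {e \<in> E. v \<notin> e}"
      by auto
    then show ?thesis using ord Suc jk unfolding type3_ordering_def by simp
  qed
qed

lemma type3_ordering_if_no_pc_closed_walk:
  assumes "finite V" "\<forall>e\<in>E. e \<subseteq> V \<and> card e = 2" "\<nexists>vs. pc_closed_walk V E col vs"
  shows "\<exists>ord. type3_ordering V E col ord"
  using assms
proof (induction "card V" arbitrary: V E rule: less_induct)
  case less
  show ?case
  proof (cases "V = {}")
    case True
    then show ?thesis by (intro exI[of _ "[]"]) (simp add: type3_ordering_def)
  next
    case False
    then obtain v where v: "v \<in> V" "monochromatic_at E col v"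
      using pc_closed_walk_if_no_monochromatic_vertex[OF less.prems(1,2)] less.prems(3) by blast
    define V' where "V' = V - {v}"
    define E' where "E' = {e \<in> E. v \<notin> e}"
    have "V' \<subseteq> V" "E' \<subseteq> E" unfolding V'_def E'_def by auto
    then have "\<nexists>vs. pc_closed_walk V' E' col vs"
      using less.prems(3) by (meson pc_closed_walk_subgraph)
    moreover have "card V' < card V" using less.prems(1) v(1) unfolding V'_def by (rule card_Diff1_less)
    moreover have "finite V'" "\<forall>e\<in>E'. e \<subseteq> V' \<and> card e = 2"
      using less.prems(1,2) unfolding V'_def E'_def by auto
    ultimately obtain ord where "type3_ordering V' E' col ord"
      using less.hyps[of V' E'] by blast
    then have "type3_ordering V E col (v # ord)"
      unfolding V'_def E'_def using v by (rule type3_ordering_Cons)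
    then show ?thesis ..
  qed
qed

theorem mainTheorem4:
  fixes c :: nat and V :: "'v set" and E :: "'v set set" and col :: "'v set \<Rightarrow> nat"
  assumes "c \<ge> 2"
    and "edge_colored_graph c V E col"
  shows "pc_acyclic_type3 V E col \<longleftrightarrow> \<not> (\<exists>vs. pc_closed_walk V E col vs)"
proof -
  have "finite V" "\<forall>e\<in>E. e \<subseteq> V \<and> card e = 2"
    using assms(2) unfolding edge_colored_graph_def by auto
  then show ?thesis
    unfolding pc_acyclic_type3_def
    by (metis type3_ordering_no_pc_closed_walk type3_ordering_if_no_pc_closed_walk)
qed

end
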